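(* Let $X=(X_1,X_2)$ be a nonnegative bivariate random vector with absolutely continuous distribution function $F$ supported in $(0,b_1)\times(0,b_2)$, $0<b_i<\infty$, with finite $\overline\varepsilon^*_i(X;t_1,t_2)$. Then there exist functions $c_1(\cdot),c_2(\cdot)$ with values in $(0,1)$ such that $$\overline\varepsilon^*_i(X;t_1,t_2)=c_i(t_j)\,m_i^X(t_1,t_2),\qquad i,j\in\{1,2\},\ i\ne j,$$ for all $(t_1,t_2)\in(0,b_1)\times(0,b_2)$ (so $c_i$ depends on $t_j$ only, not on $t_i$), if and only if $F$ is the bivariate power distribution $$F(t_1,t_2)=\left(\frac{t_1}{b_1}\right)^{c_1}\left(\frac{t_2}{b_2}\right)^{c_2+\theta\log(t_1/b_1)},\qquad 0<t_i<b_i,$$ for some $\theta\le0$ and constants $c_1,c_2>0$; in this case $c_i=\dfrac{c_i(b_j)}{1-c_i(b_j)}$.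
   Context: Let $F(x_1,x_2)=P(X_1\le x_1,X_2\le x_2)$. For $t_1,t_2>0$ with $F(t_1,t_2)>0$ define the conditional dynamic cumulative past entropies (CDCPE) $$\overline\varepsilon^*_1(X;t_1,t_2)=-\int_0^{t_1}\frac{F(x_1,t_2)}{F(t_1,t_2)}\log\frac{F(x_1,t_2)}{F(t_1,t_2)}dx_1,\qquad \overline\varepsilon^*_2(X;t_1,t_2)=-\int_0^{t_2}\frac{F(t_1,x_2)}{F(t_1,t_2)}\log\frac{F(t_1,x_2)}{F(t_1,t_2)}dx_2,$$ and the components of the bivariate expected inactivity time $m_1^X(t_1,t_2)=\frac{1}{F(t_1,t_2)}\int_0^{t_1}F(x_1,t_2)dx_1$, $m_2^X(t_1,t_2)=\frac{1}{F(t_1,t_2)}\int_0^{t_2}F(t_1,x_2)dx_2$. The values $c_i(b_j)$ are understood as the limits of $c_i(t_j)$ as $t_j\to b_j$. *)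

theory Defs
  imports "HOL-Probability.Probability"
begin

definition bcdf :: "(real \<times> real) measure \<Rightarrow> real \<Rightarrow> real \<Rightarrow> real" where
  "bcdf \<mu> x1 x2 = measure \<mu> ({..x1} \<times> {..x2})"

definition cdcpe1_integrand :: "(real \<Rightarrow> real \<Rightarrow> real) \<Rightarrow> real \<Rightarrow> real \<Rightarrow> real \<Rightarrow> real" where
  "cdcpe1_integrand F t1 t2 x1 = (F x1 t2 / F t1 t2) * ln (F x1 t2 / F t1 t2)"

definition cdcpe2_integrand :: "(real \<Rightarrow> real \<Rightarrow> real) \<Rightarrow> real \<Rightarrow> real \<Rightarrow> real \<Rightarrow> real" where
  "cdcpe2_integrand F t1 t2 x2 = (F t1 x2 / F t1 t2) * ln (F t1 x2 / F t1 t2)"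

definition cdcpe1 :: "(real \<Rightarrow> real \<Rightarrow> real) \<Rightarrow> real \<Rightarrow> real \<Rightarrow> real" where
  "cdcpe1 F t1 t2 = - (LBINT x1=0..t1. cdcpe1_integrand F t1 t2 x1)"

definition cdcpe2 :: "(real \<Rightarrow> real \<Rightarrow> real) \<Rightarrow> real \<Rightarrow> real \<Rightarrow> real" where
  "cdcpe2 F t1 t2 = - (LBINT x2=0..t2. cdcpe2_integrand F t1 t2 x2)"

definition mit1 :: "(real \<Rightarrow> real \<Rightarrow> real) \<Rightarrow> real \<Rightarrow> real \<Rightarrow> real" where
  "mit1 F t1 t2 = (LBINT x1=0..t1. F x1 t2) / F t1 t2"

definition mit2 :: "(real \<Rightarrow> real \<Rightarrow> real) \<Rightarrow> real \<Rightarrow> real \<Rightarrow> real" where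
  "mit2 F t1 t2 = (LBINT x2=0..t2. F t1 x2) / F t1 t2"

end

theory Submission
  imports Defs "HOL-Real_Asymp.Real_Asymp"
begin

text \<open>For a single distribution function \<open>G\<close> on \<open>(0, b)\<close>, let \<open>H t\<close> and \<open>J t\<close> be the
  integrals of \<open>G\<close> and \<open>G ln G\<close> over \<open>[0, t]\<close>. The relation "cumulative past entropy
  \<open>= c \<cdot>\<close> mean inactivity time" reads \<open>H ln G = c H + J\<close>; differentiating gives
  \<open>G = K H powr c\<close>, so \<open>H powr (1 - c)\<close> is linear and \<open>G\<close> is a power of \<open>t\<close> with
  exponent \<open>c / (1 - c)\<close>.

  Applied to the sections of \<open>F\<close>, this makes \<open>ln F\<close> affine in \<open>u = ln (t\<^sub>1 / b\<^sub>1)\<close> for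
  fixed \<open>t\<^sub>2\<close> and affine in \<open>v = ln (t\<^sub>2 / b\<^sub>2)\<close> for fixed \<open>t\<^sub>1\<close>, hence of the form
  \<open>P + c\<^sub>1 u + c\<^sub>2 v + \<theta> u v\<close>. Positivity of the section exponents \<open>c\<^sub>1 + \<theta> v\<close>,
  \<open>c\<^sub>2 + \<theta> u\<close> for all \<open>u, v < 0\<close> gives \<open>\<theta> \<le> 0\<close> and \<open>c\<^sub>i \<ge> 0\<close>; total mass 1 on the
  rectangle forces \<open>P = 0\<close>, and the marginals vanishing at \<open>0\<close> force \<open>c\<^sub>i > 0\<close>.
  Conversely the sections of the power distribution are powers, for which both functionals
  are explicit; the proportionality coefficient \<open>k / (k + 1)\<close> with
  \<open>k = c\<^sub>1 + \<theta> ln (t\<^sub>2 / b\<^sub>2)\<close> tends to \<open>c\<^sub>1 / (c\<^sub>1 + 1)\<close> as \<open>t\<^sub>2 \<rightarrow> b\<^sub>2\<close>.\<close>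

section \<open>One-dimensional cumulative past entropy\<close>

definition cumulative_past_entropy :: "(real \<Rightarrow> real) \<Rightarrow> real \<Rightarrow> real" where
  "cumulative_past_entropy G t = - (LBINT x=0..t. G x / G t * ln (G x / G t))"

definition mean_inactivity_time :: "(real \<Rightarrow> real) \<Rightarrow> real \<Rightarrow> real" where
  "mean_inactivity_time G t = (LBINT x=0..t. G x) / G t"

lemma cdcpe1_eq_cumulative_past_entropy:
  "cdcpe1 F t1 t2 = cumulative_past_entropy (\<lambda>x. F x t2) t1"
  by (simp add: cdcpe1_def cdcpe1_integrand_def cumulative_past_entropy_def)

lemma cdcpe2_eq_cumulative_past_entropy:
  "cdcpe2 F t1 t2 = cumulative_past_entropy (F t1) t2"
  by (simp add: cdcpe2_def cdcpe2_integrand_def cumulative_past_entropy_def)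

lemma mit1_eq_mean_inactivity_time: "mit1 F t1 t2 = mean_inactivity_time (\<lambda>x. F x t2) t1"
  by (simp add: mit1_def mean_inactivity_time_def)

lemma mit2_eq_mean_inactivity_time: "mit2 F t1 t2 = mean_inactivity_time (F t1) t2"
  by (simp add: mit2_def mean_inactivity_time_def)

lemma interval_integral_powr_ratio:
  fixes k t :: real
  assumes k: "-1 < k" and t: "0 < t"
  shows "(LBINT x=0..t. (x / t) powr k) = t / (k + 1)"
proof -
  define a where "a = 1 / (k + 1)"
  have a: "(k + 1) * a = 1" using k by (simp add: a_def)
  let ?F = "\<lambda>x. x * (x / t) powr k * a"
  have "(LBINT x=ereal 0..ereal t. (x / t) powr k) = t * a - 0"
  proof (rule interval_integral_FTC_nonneg(2))
    fix x assume "ereal 0 < ereal x" "ereal x < ereal t"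
    then have x: "0 < x" by simp
    have "DERIV ?F x :> (x / t) powr k * ((k + 1) * a)"
      using x t by (auto intro!: derivative_eq_intros simp: field_simps powr_diff)
    then show "DERIV ?F x :> (x / t) powr k" using a by simp
    show "isCont (\<lambda>x. (x / t) powr k) x" using x t by (auto intro!: continuous_intros)
  next
    have "(?F \<longlongrightarrow> 0) (at_right 0)" using k t by real_asymp
    then show "((?F \<circ> real_of_ereal) \<longlongrightarrow> 0) (at_right (ereal 0))"
      by (simp add: ereal_tendsto_simps)
    have "(?F \<longlongrightarrow> t * a) (at_left t)" using t
      by (auto intro!: tendsto_eq_intros)
    then show "((?F \<circ> real_of_ereal) \<longlongrightarrow> t * a) (at_left (ereal t))"
      by (simp add: ereal_tendsto_simps)
  qed (use t in auto)
  then show ?thesis by (simp add: zero_ereal_def a_def)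
qed

lemma interval_integral_powr_ratio_ln:
  fixes k t :: real
  assumes k: "-1 < k" and t: "0 < t"
  shows "(LBINT x=0..t. (x / t) powr k * ln (x / t)) = - t / (k + 1)\<^sup>2"
proof -
  define a where "a = 1 / (k + 1)\<^sup>2"
  define b where "b = 1 / (k + 1)"
  have ab: "(k + 1) * a = b" "(k + 1) * b = 1"
    using k by (auto simp: a_def b_def power2_eq_square)
  let ?F = "\<lambda>x. x * (x / t) powr k * (a - b * ln (x / t))"
  let ?f = "\<lambda>x. - ((x / t) powr k * ln (x / t))"
  have "(LBINT x=ereal 0..ereal t. ?f x) = t * a - 0"
  proof (rule interval_integral_FTC_nonneg(2))
    fix x assume "ereal 0 < ereal x" "ereal x < ereal t"
    then have x: "0 < x" by simp
    have "DERIV ?F x :> (x / t) powr k * (((k + 1) * a - b) - (k + 1) * b * ln (x / t))"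
      using x t by (auto intro!: derivative_eq_intros simp: field_simps powr_diff)
    then show "DERIV ?F x :> ?f x" using ab by simp
    show "isCont ?f x" using x t by (auto intro!: continuous_intros)
  next
    show "AE x in lborel. ereal 0 < ereal x \<longrightarrow> ereal x < ereal t \<longrightarrow> 0 \<le> ?f x"
      by (rule AE_I2) (auto simp: mult_nonneg_nonpos)
    have "(?F \<longlongrightarrow> 0) (at_right 0)" using k t by real_asymp
    then show "((?F \<circ> real_of_ereal) \<longlongrightarrow> 0) (at_right (ereal 0))"
      by (simp add: ereal_tendsto_simps)
    have "(?F \<longlongrightarrow> t * a) (at_left t)" using t
      by (auto intro!: tendsto_eq_intros)
    then show "((?F \<circ> real_of_ereal) \<longlongrightarrow> t * a) (at_left (ereal t))"
      by (simp add: ereal_tendsto_simps)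
  qed (use t in auto)
  then show ?thesis
    by (simp add: zero_ereal_def interval_lebesgue_integral_uminus a_def)
qed

lemma
  fixes G :: "real \<Rightarrow> real" and k t A :: real
  assumes k: "-1 < k" and t: "0 < t" and A: "0 < A"
    and G: "\<And>x. 0 < x \<Longrightarrow> x \<le> t \<Longrightarrow> G x = A * (x / t) powr k"
  shows mean_inactivity_time_power: "mean_inactivity_time G t = t / (k + 1)"
    and cumulative_past_entropy_power:
      "cumulative_past_entropy G t = k / (k + 1) * mean_inactivity_time G t"
proof -
  have Gt: "G t = A" using G[of t] t by simp
  have on_interval: "0 < x" "x < t" if "x \<in> einterval (min 0 (ereal t)) (max 0 (ereal t))" for x
    using that t by (auto simp: einterval_iff zero_ereal_def)
  have "(LBINT x=0..t. G x) = (LBINT x=0..t. A * (x / t) powr k)"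
  proof (rule interval_integral_cong)
    fix x assume "x \<in> einterval (min 0 (ereal t)) (max 0 (ereal t))"
    then have "0 < x" "x < t" by (rule on_interval)+
    then show "G x = A * (x / t) powr k" by (simp add: G)
  qed
  also have "\<dots> = A * (t / (k + 1))"
    using interval_integral_powr_ratio[OF k t] by simp
  finally show mit: "mean_inactivity_time G t = t / (k + 1)"
    using A by (simp add: mean_inactivity_time_def Gt)
  have "(LBINT x=0..t. G x / G t * ln (G x / G t)) = (LBINT x=0..t. k * ((x / t) powr k * ln (x / t)))"
  proof (rule interval_integral_cong)
    fix x assume "x \<in> einterval (min 0 (ereal t)) (max 0 (ereal t))"
    then have "0 < x" "x < t" by (rule on_interval)+
    then show "G x / G t * ln (G x / G t) = k * ((x / t) powr k * ln (x / t))"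
      using A t by (simp add: G Gt ln_powr)
  qed
  also have "\<dots> = - k * t / (k + 1)\<^sup>2"
    using interval_integral_powr_ratio_ln[OF k t] by simp
  finally show "cumulative_past_entropy G t = k / (k + 1) * mean_inactivity_time G t"
    unfolding cumulative_past_entropy_def mit by (simp add: power2_eq_square)
qed

section \<open>Sections with proportional entropy are powers\<close>

lemma abs_mult_ln_le_one:
  fixes u :: real assumes "0 \<le> u" "u \<le> 1" shows "\<bar>u * ln u\<bar> \<le> 1"
proof (cases "u = 0")
  case False
  then have u: "0 < u" using assms by simp
  have "- ln u \<le> 1 / u - 1"
    using ln_le_minus_one[of "1 / u"] u by (simp add: ln_div)
  then have "- (u * ln u) \<le> 1 - u" using u by (simp add: field_simps)
  moreover have "u * ln u \<le> 0" using u assms by (simp add: mult_nonneg_nonpos)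
  ultimately show ?thesis using u by (simp add: abs_le_iff)
qed simp

lemma
  fixes f :: "real \<Rightarrow> real" and a b B :: real
  assumes f: "f \<in> borel_measurable borel" and "a \<le> b"
    and bound: "\<And>x. a < x \<Longrightarrow> x < b \<Longrightarrow> \<bar>f x\<bar> \<le> B"
  shows interval_lebesgue_integrable_bounded: "interval_lebesgue_integrable lborel a b f"
    and interval_lebesgue_integral_eq_integral_bounded: "(LBINT x=a..b. f x) = integral {a..b} f"
    and integrable_on_bounded: "f integrable_on {a..b}"
proof -
  have "set_integrable lborel {a<..<b} f"
    unfolding set_integrable_def
    by (rule integrableI_bounded_set_indicator[where B=B]) (use f bound \<open>a \<le> b\<close> in auto)
  then have si: "set_integrable lborel (einterval a b) f" by simp
  then show "interval_lebesgue_integrable lborel a b f"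
    using \<open>a \<le> b\<close> by (simp add: interval_lebesgue_integrable_def)
  show "(LBINT x=a..b. f x) = integral {a..b} f"
    using interval_integral_eq_integral'[OF _ si] \<open>a \<le> b\<close> by (simp add: integral_open_interval_real)
  show "f integrable_on {a..b}"
    using set_borel_integral_eq_integral(1)[OF si] by (simp add: integrable_on_Icc_iff_Ioo)
qed

lemma isCont_indefinite_integral:
  fixes f :: "real \<Rightarrow> real"
  assumes "f integrable_on {a..c}" "a < t" "t < c"
  shows "isCont (\<lambda>u. integral {a..u} f) t"
proof -
  have "continuous_on {a<..<c} (\<lambda>u. integral {a..u} f)"
    using indefinite_integral_continuous_1[OF assms(1)] by (rule continuous_on_subset) auto
  then show ?thesis
    using assms(2,3) by (simp add: continuous_on_eq_continuous_at)
qed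

lemma has_real_derivative_indefinite_integral:
  fixes f :: "real \<Rightarrow> real"
  assumes "f integrable_on {a..c}" "a < t" "t < c" "isCont f t"
  shows "((\<lambda>u. integral {a..u} f) has_real_derivative f t) (at t)"
proof -
  have "((\<lambda>u. integral {a..u} f) has_vector_derivative f t) (at t within {a..c} - {})"
    by (rule integral_has_vector_derivative_continuous_at)
       (use assms in \<open>auto intro: continuous_at_imp_continuous_at_within\<close>)
  then have "((\<lambda>u. integral {a..u} f) has_vector_derivative f t) (at t within {a<..<c})"
    by (rule has_vector_derivative_within_subset) auto
  then have "((\<lambda>u. integral {a..u} f) has_vector_derivative f t) (at t)"
    using has_vector_derivative_within_open[of t "{a<..<c}"] assms(2,3) by auto
  then show ?thesis by (simp add: has_real_derivative_iff_has_vector_derivative)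
qed

locale cpe_proportional =
  fixes G :: "real \<Rightarrow> real" and b c :: real
  assumes b_pos: "0 < b" and c_less_one: "c < 1"
    and mono: "mono G" and nonneg: "\<And>x. 0 \<le> G x" and le_one: "\<And>x. G x \<le> 1"
    and pos: "\<And>x. 0 < x \<Longrightarrow> x < b \<Longrightarrow> 0 < G x"
    and proportional: "\<And>t. 0 < t \<Longrightarrow> t < b \<Longrightarrow>
      cumulative_past_entropy G t = c * mean_inactivity_time G t"
begin

definition H :: "real \<Rightarrow> real" where "H t = integral {0..t} G"

definition J :: "real \<Rightarrow> real" where "J t = integral {0..t} (\<lambda>x. G x * ln (G x))"

lemma G_borel [measurable]: "G \<in> borel_measurable borel"
  by (rule borel_measurable_mono[OF mono])

lemma G_bounds: "\<bar>G x\<bar> \<le> 1" "\<bar>G x * ln (G x)\<bar> \<le> 1"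
  using nonneg[of x] le_one[of x] abs_mult_ln_le_one by auto

lemma
  assumes "0 \<le> t"
  shows integrable_G: "interval_lebesgue_integrable lborel 0 t G"
    and LBINT_G: "(LBINT x=0..t. G x) = H t"
    and integrable_on_G: "G integrable_on {0..t}"
    and integrable_G_ln_G: "interval_lebesgue_integrable lborel 0 t (\<lambda>x. G x * ln (G x))"
    and LBINT_G_ln_G: "(LBINT x=0..t. G x * ln (G x)) = J t"
    and integrable_on_G_ln_G: "(\<lambda>x. G x * ln (G x)) integrable_on {0..t}"
proof -
  have G_ln_G_borel: "(\<lambda>x. G x * ln (G x)) \<in> borel_measurable borel" by measurable
  note bounded_G = G_borel assms G_bounds(1) and bounded_G_ln_G = G_ln_G_borel assms G_bounds(2)
  show "interval_lebesgue_integrable lborel 0 t G"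
    using interval_lebesgue_integrable_bounded[OF bounded_G] by (simp add: zero_ereal_def)
  show "(LBINT x=0..t. G x) = H t"
    using interval_lebesgue_integral_eq_integral_bounded[OF bounded_G]
    by (simp add: zero_ereal_def H_def)
  show "G integrable_on {0..t}" by (rule integrable_on_bounded[OF bounded_G])
  show "interval_lebesgue_integrable lborel 0 t (\<lambda>x. G x * ln (G x))"
    using interval_lebesgue_integrable_bounded[OF bounded_G_ln_G] by (simp add: zero_ereal_def)
  show "(LBINT x=0..t. G x * ln (G x)) = J t"
    using interval_lebesgue_integral_eq_integral_bounded[OF bounded_G_ln_G]
    by (simp add: zero_ereal_def J_def)
  show "(\<lambda>x. G x * ln (G x)) integrable_on {0..t}" by (rule integrable_on_bounded[OF bounded_G_ln_G])
qed

lemma ln_G_mult_H: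
  assumes t: "0 < t" "t < b"
  shows "ln (G t) * H t = c * H t + J t"
proof -
  have Gt: "0 < G t" using pos t by simp
  have "(LBINT x=0..t. G x / G t * ln (G x / G t))
      = (LBINT x=0..t. G x * ln (G x) / G t - ln (G t) / G t * G x)"
  proof (rule interval_integral_cong)
    fix x assume "x \<in> einterval (min 0 (ereal t)) (max 0 (ereal t))"
    then have "0 < G x" using pos t by (auto simp: einterval_iff zero_ereal_def)
    then show "G x / G t * ln (G x / G t) = G x * ln (G x) / G t - ln (G t) / G t * G x"
      using Gt by (simp add: ln_div field_simps)
  qed
  also have "\<dots> = J t / G t - ln (G t) / G t * H t"
    using t(1) by (simp add: integrable_G integrable_G_ln_G LBINT_G LBINT_G_ln_G)
  finally have "- (J t / G t - ln (G t) / G t * H t) = c * (H t / G t)"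
    using proportional[OF t] LBINT_G[of t] t
    by (simp add: cumulative_past_entropy_def mean_inactivity_time_def)
  then have "G t * (ln (G t) * H t) = G t * (c * H t + J t)"
    using Gt by (simp add: field_simps)
  then show ?thesis using Gt by simp
qed

lemma H_le: "0 \<le> t \<Longrightarrow> H t \<le> t"
  using integral_le[OF integrable_on_G integrable_on_const[of "{0..t}" "1::real"]] le_one
  by (simp add: H_def)

lemma H_pos:
  assumes t: "0 < t" "t < b"
  shows "0 < H t"
proof -
  have "0 < t / 2 * G (t / 2)" using t pos[of "t / 2"] by simp
  also have "\<dots> = integral {t/2..t} (\<lambda>_. G (t / 2))" using t by simp
  also have "\<dots> \<le> integral {t/2..t} G"
    by (rule integral_le) (use integrable_on_subinterval[OF integrable_on_G[of t]] t mono
        in \<open>auto simp: mono_def\<close>)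
  also have "\<dots> \<le> integral {0..t/2} G + integral {t/2..t} G"
    using integral_nonneg[OF integrable_on_subinterval[OF integrable_on_G[of t]], of 0 "t/2"] nonneg t
    by auto
  also have "\<dots> = H t"
    unfolding H_def using t by (intro Henstock_Kurzweil_Integration.integral_combine integrable_on_G) auto
  finally show ?thesis .
qed

lemma ln_G_eq:
  assumes "0 < t" "t < b"
  shows "ln (G t) = c + J t / H t"
  using ln_G_mult_H[OF assms] H_pos[OF assms] by (simp add: field_simps)

lemma isCont_H: "0 < t \<Longrightarrow> isCont H t"
  unfolding H_def by (rule isCont_indefinite_integral[OF integrable_on_G[of "t + 1"]]) auto

lemma isCont_J: "0 < t \<Longrightarrow> isCont J t"
  unfolding J_def by (rule isCont_indefinite_integral[OF integrable_on_G_ln_G[of "t + 1"]]) auto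

lemma isCont_G:
  assumes t: "0 < t" "t < b"
  shows "isCont G t"
proof -
  have "eventually (\<lambda>s. s \<in> {0<..<b}) (nhds t)"
    by (rule eventually_nhds_in_open) (use t in auto)
  then have "eventually (\<lambda>s. G s = exp (c + J s / H s)) (nhds t)"
  proof (rule eventually_mono)
    fix s assume "s \<in> {0<..<b}"
    then show "G s = exp (c + J s / H s)"
      using pos[of s] by (simp flip: ln_G_eq)
  qed
  moreover have "isCont (\<lambda>s. exp (c + J s / H s)) t"
    using isCont_H isCont_J H_pos[OF t] t by (auto intro!: continuous_intros)
  ultimately show ?thesis by (simp add: isCont_cong)
qed

lemma
  assumes t: "0 < t" "t < b"
  shows H_deriv: "DERIV H t :> G t"
    and J_deriv: "DERIV J t :> G t * ln (G t)"
proof -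
  have "isCont (\<lambda>x. G x * ln (G x)) t"
    using isCont_G[OF t] pos[OF t] by (auto intro!: continuous_intros)
  with t show "DERIV J t :> G t * ln (G t)" unfolding J_def
    by (intro has_real_derivative_indefinite_integral[where c="t + 1"] integrable_on_G_ln_G) auto
  show "DERIV H t :> G t" unfolding H_def using t isCont_G[OF t]
    by (intro has_real_derivative_indefinite_integral[where c="t + 1"] integrable_on_G) auto
qed

lemma ln_G_minus_c_ln_H_constant:
  obtains z where "\<And>s. 0 < s \<Longrightarrow> s < b \<Longrightarrow> ln (G s) = z + c * ln (H s)"
proof -
  have "DERIV (\<lambda>s. ln (G s) - c * ln (H s)) t :> 0" if t: "0 < t" "t < b" for t
  proof -
    have Ht: "0 < H t" using H_pos[OF t] .
    have "eventually (\<lambda>s. s \<in> {0<..<b}) (nhds t)"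
      by (rule eventually_nhds_in_open) (use t in auto)
    then have ev: "eventually (\<lambda>s. ln (G s) - c * ln (H s) = c + J s / H s - c * ln (H s)) (nhds t)"
      by (rule eventually_mono) (simp add: ln_G_eq)
    have "DERIV (\<lambda>s. c + J s / H s - c * ln (H s)) t :>
        G t / H t * (ln (G t) - (c * H t + J t) / H t)"
      using J_deriv[OF t] H_deriv[OF t] Ht
      by (auto intro!: derivative_eq_intros simp: field_simps power2_eq_square)
    moreover have "(c * H t + J t) / H t = ln (G t)"
      using ln_G_mult_H[OF t] Ht by (simp add: field_simps)
    ultimately have "DERIV (\<lambda>s. c + J s / H s - c * ln (H s)) t :> 0" by simp
    then show ?thesis using DERIV_cong_ev[OF refl ev refl] by simp
  qed
  then have "\<exists>z. \<forall>s\<in>{0<..<b}. ln (G s) - c * ln (H s) = z"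
    by (intro has_field_derivative_zero_constant) (auto intro: has_field_derivative_at_within)
  then obtain z where "\<forall>s\<in>{0<..<b}. ln (G s) - c * ln (H s) = z" by blast
  then show ?thesis by (intro that[of z]) (auto simp: algebra_simps)
qed

text \<open>With \<open>G = exp z * H powr c\<close> the equation \<open>H' = G\<close> is separable; the integration
  constant vanishes because \<open>H t \<le> t\<close>.\<close>
lemma H_powr_linear:
  obtains K where "0 < K" "\<And>s. 0 < s \<Longrightarrow> s < b \<Longrightarrow> H s powr (1 - c) = K * s"
proof -
  obtain z where z: "\<And>s. 0 < s \<Longrightarrow> s < b \<Longrightarrow> ln (G s) = z + c * ln (H s)"
    using ln_G_minus_c_ln_H_constant by blast
  define K where "K = (1 - c) * exp z"
  have K: "0 < K" using c_less_one by (simp add: K_def)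
  have "DERIV (\<lambda>s. H s powr (1 - c) - K * s) t :> 0" if t: "0 < t" "t < b" for t
  proof -
    have Ht: "0 < H t" using H_pos[OF t] .
    have "G t = exp (ln (G t))" using pos[OF t] by simp
    also have "\<dots> = exp z * H t powr c" using z[OF t] Ht by (simp add: exp_add powr_def)
    finally have Gt: "G t = exp z * H t powr c" .
    have "DERIV (\<lambda>s. H s powr (1 - c)) t :> (1 - c) * H t powr (1 - c - 1) * G t"
      by (rule DERIV_chain2[OF has_real_derivative_powr[OF Ht] H_deriv[OF t]])
    moreover have "(1 - c) * H t powr (1 - c - 1) * G t = K"
      using Ht by (simp add: Gt K_def flip: powr_add)
    ultimately have "DERIV (\<lambda>s. H s powr (1 - c)) t :> K" by simp
    from DERIV_diff[OF this DERIV_cmult_Id[of K]] show ?thesis by simp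
  qed
  then have "\<exists>D. \<forall>s\<in>{0<..<b}. H s powr (1 - c) - K * s = D"
    by (intro has_field_derivative_zero_constant) (auto intro: has_field_derivative_at_within)
  then obtain D where D: "\<And>s. s \<in> {0<..<b} \<Longrightarrow> H s powr (1 - c) - K * s = D" by blast
  have ev: "eventually (\<lambda>s. s \<in> {0<..<b}) (at_right 0)"
    using eventually_at_right_real[OF b_pos] .
  have "((\<lambda>s. H s powr (1 - c)) \<longlongrightarrow> 0) (at_right 0)"
  proof (rule tendsto_sandwich[OF _ _ tendsto_const])
    show "eventually (\<lambda>s. 0 \<le> H s powr (1 - c)) (at_right 0)" by simp
    show "eventually (\<lambda>s. H s powr (1 - c) \<le> s powr (1 - c)) (at_right 0)"
    proof (rule eventually_mono[OF ev])
      fix s assume "s \<in> {0<..<b}"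
      then show "H s powr (1 - c) \<le> s powr (1 - c)"
        using H_pos[of s] H_le[of s] c_less_one by (auto intro!: powr_mono2)
    qed
    show "((\<lambda>s. s powr (1 - c)) \<longlongrightarrow> 0) (at_right 0)"
      using c_less_one by real_asymp
  qed
  then have "((\<lambda>s. H s powr (1 - c) - K * s) \<longlongrightarrow> 0 - K * 0) (at_right 0)"
    by (intro tendsto_intros)
  moreover have "eventually (\<lambda>s. H s powr (1 - c) - K * s = D) (at_right 0)"
    by (rule eventually_mono[OF ev]) (rule D)
  ultimately have "((\<lambda>_. D) \<longlongrightarrow> 0 - K * 0) (at_right (0::real))"
    by (rule tendsto_cong[THEN iffD1, rotated])
  then have "D = 0" by (simp add: tendsto_const_iff)
  then show ?thesis using that[OF K] D by simp
qed

lemma ln_G_affine: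
  obtains \<alpha> where "\<And>t. 0 < t \<Longrightarrow> t < b \<Longrightarrow> ln (G t) = \<alpha> + c / (1 - c) * ln (t / b)"
proof -
  obtain z where z: "\<And>s. 0 < s \<Longrightarrow> s < b \<Longrightarrow> ln (G s) = z + c * ln (H s)"
    using ln_G_minus_c_ln_H_constant by blast
  obtain K where K: "0 < K" "\<And>s. 0 < s \<Longrightarrow> s < b \<Longrightarrow> H s powr (1 - c) = K * s"
    using H_powr_linear by blast
  have "ln (G t) = z + c / (1 - c) * (ln K + ln b) + c / (1 - c) * ln (t / b)"
    if t: "0 < t" "t < b" for t
  proof -
    have "(1 - c) * ln (H t) = ln (H t powr (1 - c))" using H_pos[OF t] by (simp add: ln_powr)
    also have "\<dots> = ln K + ln b + ln (t / b)"
      using K t b_pos by (simp add: ln_mult ln_div)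
    finally have "(1 - c) * ln (H t) = ln K + ln b + ln (t / b)" .
    moreover have "1 - c \<noteq> 0" using c_less_one by simp
    ultimately have L: "ln (H t) = (ln K + ln b + ln (t / b)) / (1 - c)"
      by (simp add: field_simps)
    show ?thesis unfolding z[OF t] L by (simp add: add_divide_distrib distrib_left)
  qed
  then show ?thesis using that by blast
qed

end

section \<open>Separately affine functions\<close>

lemma biaffine_if_separately_affine:
  fixes f :: "real \<Rightarrow> real \<Rightarrow> real" and X Y :: "real set"
  assumes X: "p \<in> X" "q \<in> X" "p \<noteq> q" and Y: "r \<in> Y" "s \<in> Y" "r \<noteq> s"
    and affine1: "\<And>x y. x \<in> X \<Longrightarrow> y \<in> Y \<Longrightarrow> f x y = a1 y + k1 y * x"
    and affine2: "\<And>x y. x \<in> X \<Longrightarrow> y \<in> Y \<Longrightarrow> f x y = a2 x + k2 x * y"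
  obtains P A B \<theta> where "\<And>x y. x \<in> X \<Longrightarrow> y \<in> Y \<Longrightarrow> f x y = P + A * x + B * y + \<theta> * x * y"
    and "\<And>y. y \<in> Y \<Longrightarrow> k1 y = A + \<theta> * y" and "\<And>x. x \<in> X \<Longrightarrow> k2 x = B + \<theta> * x"
proof -
  define A where "A = (a2 p - a2 q) / (p - q)"
  define \<theta> where "\<theta> = (k2 p - k2 q) / (p - q)"
  have a2p: "a2 p = a2 q + A * (p - q)" and k2p: "k2 p = k2 q + \<theta> * (p - q)"
    using X(3) by (simp_all add: A_def \<theta>_def)
  have slope1: "k1 y = A + \<theta> * y" if y: "y \<in> Y" for y
  proof -
    have "k1 y * (p - q) = f p y - f q y"
      using affine1[OF X(1) y] affine1[OF X(2) y] by (simp add: algebra_simps)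
    also have "\<dots> = (A + \<theta> * y) * (p - q)"
      using affine2[OF X(1) y] affine2[OF X(2) y] by (simp add: a2p k2p algebra_simps)
    finally show ?thesis using X(3) by simp
  qed
  define P where "P = a2 p - A * p"
  define B where "B = k2 p - \<theta> * p"
  have biaffine: "f x y = P + A * x + B * y + \<theta> * x * y" if "x \<in> X" "y \<in> Y" for x y
  proof -
    have "f x y - f p y = k1 y * (x - p)"
      using affine1[OF that(1,2)] affine1[OF X(1) that(2)] by (simp add: algebra_simps)
    then show ?thesis
      using affine2[OF X(1) that(2)] slope1[OF that(2)] by (simp add: P_def B_def algebra_simps)
  qed
  have slope2: "k2 x = B + \<theta> * x" if x: "x \<in> X" for x
  proof -
    have "k2 x * (r - s) = f x r - f x s"
      using affine2[OF x Y(1)] affine2[OF x Y(2)] by (simp add: algebra_simps)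
    also have "\<dots> = (B + \<theta> * x) * (r - s)"
      using biaffine[OF x Y(1)] biaffine[OF x Y(2)] by (simp add: algebra_simps)
    finally show ?thesis using Y(3) by simp
  qed
  show ?thesis using that biaffine slope1 slope2 by blast
qed

lemma affine_pos_on_negatives:
  fixes c \<theta> :: real
  assumes pos: "\<And>v. v < 0 \<Longrightarrow> 0 < c + \<theta> * v"
  shows "\<theta> \<le> 0" and "0 \<le> c"
proof -
  show "\<theta> \<le> 0"
  proof (rule ccontr)
    assume "\<not> \<theta> \<le> 0"
    then have "- (\<bar>c\<bar> + 1) / \<theta> < 0" and "c + \<theta> * (- (\<bar>c\<bar> + 1) / \<theta>) \<le> - 1"
      by (auto simp: divide_neg_pos)
    with pos show False by force
  qed
  have "((\<lambda>v. c + \<theta> * v) \<longlongrightarrow> c + \<theta> * 0) (at_left 0)"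
    by (intro tendsto_intros)
  moreover have "eventually (\<lambda>v. 0 \<le> c + \<theta> * v) (at_left (0::real))"
  proof (rule eventually_mono[OF eventually_at_left_real[of "-1" 0]])
    fix v :: real assume "v \<in> {-1<..<0}"
    then show "0 \<le> c + \<theta> * v" using pos[of v] by simp
  qed simp
  ultimately show "0 \<le> c"
    by (simp add: tendsto_lowerbound)
qed

section \<open>The bivariate power distribution\<close>

lemma bivariate_power_eq_exp:
  fixes x y b1 b2 c1 c2 \<theta> :: real
  assumes "0 < x" "0 < y" "0 < b1" "0 < b2"
  shows "(x / b1) powr c1 * (y / b2) powr (c2 + \<theta> * ln (x / b1)) =
    exp (c1 * ln (x / b1) + c2 * ln (y / b2) + \<theta> * ln (x / b1) * ln (y / b2))"
  using assms by (simp add: powr_def exp_add algebra_simps)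

lemma tendsto_power_form_coefficient:
  fixes cf :: "real \<Rightarrow> real" and b c \<theta> :: real
  assumes "0 < b" "0 < c"
    and cf: "\<And>t. t \<in> {0<..<b} \<Longrightarrow> cf t = (c + \<theta> * ln (t / b)) / (c + \<theta> * ln (t / b) + 1)"
  shows "(cf \<longlongrightarrow> c / (c + 1)) (at_left b)"
proof -
  have "((\<lambda>t. (c + \<theta> * ln (t / b)) / (c + \<theta> * ln (t / b) + 1))
      \<longlongrightarrow> (c + \<theta> * ln (b / b)) / (c + \<theta> * ln (b / b) + 1)) (at_left b)"
    using assms(1,2) by (intro tendsto_intros) auto
  moreover have "eventually (\<lambda>t. (c + \<theta> * ln (t / b)) / (c + \<theta> * ln (t / b) + 1) = cf t) (at_left b)"
    using eventually_at_left_real[OF assms(1)] by (auto simp: cf elim: eventually_mono)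
  ultimately show ?thesis using assms(1) by (simp add: tendsto_cong)
qed

context
  fixes F :: "real \<Rightarrow> real \<Rightarrow> real" and b1 b2 c1 c2 \<theta> :: real
  assumes b_pos: "0 < b1" "0 < b2" and \<theta>: "\<theta> \<le> 0" and c_pos: "0 < c1" "0 < c2"
    and power_form: "\<And>t1 t2. t1 \<in> {0<..<b1} \<Longrightarrow> t2 \<in> {0<..<b2} \<Longrightarrow>
      F t1 t2 = (t1 / b1) powr c1 * (t2 / b2) powr (c2 + \<theta> * ln (t1 / b1))"
begin

lemma power_form_exp:
  assumes "t1 \<in> {0<..<b1}" "t2 \<in> {0<..<b2}"
  shows "F t1 t2 = exp (c1 * ln (t1 / b1) + c2 * ln (t2 / b2) + \<theta> * ln (t1 / b1) * ln (t2 / b2))"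
  using assms b_pos by (simp add: power_form bivariate_power_eq_exp)

lemma power_form_exponents_pos:
  assumes "t1 \<in> {0<..<b1}" "t2 \<in> {0<..<b2}"
  shows "0 < c1 + \<theta> * ln (t2 / b2)" and "0 < c2 + \<theta> * ln (t1 / b1)"
  using assms \<theta> c_pos by (auto intro!: add_pos_nonneg mult_nonpos_nonpos)

lemma
  assumes t: "t1 \<in> {0<..<b1}" "t2 \<in> {0<..<b2}"
  shows power_form_section1:
      "\<And>x. 0 < x \<Longrightarrow> x \<le> t1 \<Longrightarrow> F x t2 = F t1 t2 * (x / t1) powr (c1 + \<theta> * ln (t2 / b2))"
    and power_form_section2:
      "\<And>y. 0 < y \<Longrightarrow> y \<le> t2 \<Longrightarrow> F t1 y = F t1 t2 * (y / t2) powr (c2 + \<theta> * ln (t1 / b1))"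
proof -
  fix x assume "0 < x" "x \<le> t1"
  then have "x \<in> {0<..<b1}" "ln (x / b1) = ln (x / t1) + ln (t1 / b1)"
    using t b_pos by (auto simp: ln_div)
  then show "F x t2 = F t1 t2 * (x / t1) powr (c1 + \<theta> * ln (t2 / b2))"
    using t \<open>0 < x\<close> by (simp add: power_form_exp powr_def exp_add[symmetric] ln_div algebra_simps)
next
  fix y assume "0 < y" "y \<le> t2"
  then have "y \<in> {0<..<b2}" "ln (y / b2) = ln (y / t2) + ln (t2 / b2)"
    using t b_pos by (auto simp: ln_div)
  then show "F t1 y = F t1 t2 * (y / t2) powr (c2 + \<theta> * ln (t1 / b1))"
    using t \<open>0 < y\<close> by (simp add: power_form_exp powr_def exp_add[symmetric] ln_div algebra_simps)
qed

lemma
  assumes t: "t1 \<in> {0<..<b1}" "t2 \<in> {0<..<b2}"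
  shows cdcpe1_power_form: "cdcpe1 F t1 t2 =
      (c1 + \<theta> * ln (t2 / b2)) / (c1 + \<theta> * ln (t2 / b2) + 1) * mit1 F t1 t2"
    and mit1_power_form_pos: "0 < mit1 F t1 t2"
    and cdcpe2_power_form: "cdcpe2 F t1 t2 =
      (c2 + \<theta> * ln (t1 / b1)) / (c2 + \<theta> * ln (t1 / b1) + 1) * mit2 F t1 t2"
    and mit2_power_form_pos: "0 < mit2 F t1 t2"
proof -
  have k: "-1 < c1 + \<theta> * ln (t2 / b2)" "-1 < c2 + \<theta> * ln (t1 / b1)"
    using power_form_exponents_pos[OF t] by linarith+
  have F_pos: "0 < F t1 t2" using power_form_exp[OF t] by simp
  note section1 = power_form_section1[OF t] and section2 = power_form_section2[OF t]
  have t_pos: "0 < t1" "0 < t2" using t by auto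
  show "cdcpe1 F t1 t2 = (c1 + \<theta> * ln (t2 / b2)) / (c1 + \<theta> * ln (t2 / b2) + 1) * mit1 F t1 t2"
    using cumulative_past_entropy_power[OF k(1) t_pos(1) F_pos section1]
    by (simp add: cdcpe1_eq_cumulative_past_entropy mit1_eq_mean_inactivity_time)
  show "0 < mit1 F t1 t2"
    using mean_inactivity_time_power[OF k(1) t_pos(1) F_pos section1] k(1) t_pos
    by (simp add: mit1_eq_mean_inactivity_time)
  show "cdcpe2 F t1 t2 = (c2 + \<theta> * ln (t1 / b1)) / (c2 + \<theta> * ln (t1 / b1) + 1) * mit2 F t1 t2"
    using cumulative_past_entropy_power[OF k(2) t_pos(2) F_pos section2]
    by (simp add: cdcpe2_eq_cumulative_past_entropy mit2_eq_mean_inactivity_time)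
  show "0 < mit2 F t1 t2"
    using mean_inactivity_time_power[OF k(2) t_pos(2) F_pos section2] k(2) t_pos
    by (simp add: mit2_eq_mean_inactivity_time)
qed

lemma cdcpe_proportional_if_power_form:
  "\<exists>cf1 cf2. (\<forall>t2\<in>{0<..<b2}. cf1 t2 \<in> {0<..<1}) \<and> (\<forall>t1\<in>{0<..<b1}. cf2 t1 \<in> {0<..<1}) \<and>
    (\<forall>t1\<in>{0<..<b1}. \<forall>t2\<in>{0<..<b2}.
      cdcpe1 F t1 t2 = cf1 t2 * mit1 F t1 t2 \<and> cdcpe2 F t1 t2 = cf2 t1 * mit2 F t1 t2)"
proof -
  let ?cf1 = "\<lambda>t2. (c1 + \<theta> * ln (t2 / b2)) / (c1 + \<theta> * ln (t2 / b2) + 1)"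
  let ?cf2 = "\<lambda>t1. (c2 + \<theta> * ln (t1 / b1)) / (c2 + \<theta> * ln (t1 / b1) + 1)"
  have mid: "b1 / 2 \<in> {0<..<b1}" "b2 / 2 \<in> {0<..<b2}" using b_pos by auto
  have "?cf1 t2 \<in> {0<..<1}" if "t2 \<in> {0<..<b2}" for t2
    using power_form_exponents_pos(1)[OF mid(1) that] by simp
  moreover have "?cf2 t1 \<in> {0<..<1}" if "t1 \<in> {0<..<b1}" for t1
    using power_form_exponents_pos(2)[OF that mid(2)] by simp
  ultimately have "(\<forall>t2\<in>{0<..<b2}. ?cf1 t2 \<in> {0<..<1}) \<and> (\<forall>t1\<in>{0<..<b1}. ?cf2 t1 \<in> {0<..<1}) \<and>
    (\<forall>t1\<in>{0<..<b1}. \<forall>t2\<in>{0<..<b2}.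
      cdcpe1 F t1 t2 = ?cf1 t2 * mit1 F t1 t2 \<and> cdcpe2 F t1 t2 = ?cf2 t1 * mit2 F t1 t2)"
    using cdcpe1_power_form cdcpe2_power_form by blast
  then show ?thesis by (rule exI[of _ ?cf1, OF exI[of _ ?cf2]])
qed

lemma proportionality_coefficients_eq:
  assumes proportional: "\<And>t1 t2. t1 \<in> {0<..<b1} \<Longrightarrow> t2 \<in> {0<..<b2} \<Longrightarrow>
      cdcpe1 F t1 t2 = cf1 t2 * mit1 F t1 t2 \<and> cdcpe2 F t1 t2 = cf2 t1 * mit2 F t1 t2"
  shows "\<And>t2. t2 \<in> {0<..<b2} \<Longrightarrow> cf1 t2 = (c1 + \<theta> * ln (t2 / b2)) / (c1 + \<theta> * ln (t2 / b2) + 1)"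
    and "\<And>t1. t1 \<in> {0<..<b1} \<Longrightarrow> cf2 t1 = (c2 + \<theta> * ln (t1 / b1)) / (c2 + \<theta> * ln (t1 / b1) + 1)"
proof -
  have mid: "b1 / 2 \<in> {0<..<b1}" "b2 / 2 \<in> {0<..<b2}" using b_pos by auto
  fix t2 assume t2: "t2 \<in> {0<..<b2}"
  have "cf1 t2 * mit1 F (b1 / 2) t2 =
      (c1 + \<theta> * ln (t2 / b2)) / (c1 + \<theta> * ln (t2 / b2) + 1) * mit1 F (b1 / 2) t2"
    using proportional[OF mid(1) t2] cdcpe1_power_form[OF mid(1) t2] by metis
  then show "cf1 t2 = (c1 + \<theta> * ln (t2 / b2)) / (c1 + \<theta> * ln (t2 / b2) + 1)"
    using mit1_power_form_pos[OF mid(1) t2] by (metis mult_right_cancel order_less_irrefl)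
next
  have mid: "b1 / 2 \<in> {0<..<b1}" "b2 / 2 \<in> {0<..<b2}" using b_pos by auto
  fix t1 assume t1: "t1 \<in> {0<..<b1}"
  have "cf2 t1 * mit2 F t1 (b2 / 2) =
      (c2 + \<theta> * ln (t1 / b1)) / (c2 + \<theta> * ln (t1 / b1) + 1) * mit2 F t1 (b2 / 2)"
    using proportional[OF t1 mid(2)] cdcpe2_power_form[OF t1 mid(2)] by metis
  then show "cf2 t1 = (c2 + \<theta> * ln (t1 / b1)) / (c2 + \<theta> * ln (t1 / b1) + 1)"
    using mit2_power_form_pos[OF t1 mid(2)] by (metis mult_right_cancel order_less_irrefl)
qed

end

section \<open>Distributions supported on a rectangle\<close>

lemma exponent_pos_if_power_below_vanishing:
  fixes M :: "real \<Rightarrow> real" and A b :: real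
  assumes "0 < b" "0 \<le> A" and M: "(M \<longlongrightarrow> 0) (at_right 0)"
    and below: "\<And>t. 0 < t \<Longrightarrow> t < b \<Longrightarrow> exp (A * ln (t / b)) \<le> M t"
  shows "0 < A"
proof (rule ccontr)
  assume "\<not> 0 < A"
  then have "A = 0" using assms(2) by simp
  then have "eventually (\<lambda>t. 1 \<le> M t) (at_right 0)"
    using below eventually_at_right_real[OF \<open>0 < b\<close>] by (force elim: eventually_mono)
  then have "1 \<le> (0::real)" using M by (intro tendsto_lowerbound) auto
  then show False by simp
qed

lemma (in prob_space)
  fixes g :: "'a \<Rightarrow> real"
  assumes "g \<in> borel_measurable M"
  shows measure_vimage_atMost_tendsto_right:
      "((\<lambda>x. measure M (g -` {..x} \<inter> space M)) \<longlongrightarrow> measure M (g -` {..a} \<inter> space M)) (at_right a)"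
    and measure_vimage_atMost_tendsto_left:
      "((\<lambda>x. measure M (g -` {..x} \<inter> space M)) \<longlongrightarrow> measure M (g -` {..<a} \<inter> space M)) (at_left a)"
proof -
  interpret D: real_distribution "distr M borel g" using assms by simp
  have cdf: "cdf (distr M borel g) = (\<lambda>x. measure M (g -` {..x} \<inter> space M))"
    using assms by (simp add: cdf_def measure_distr)
  show "((\<lambda>x. measure M (g -` {..x} \<inter> space M)) \<longlongrightarrow> measure M (g -` {..a} \<inter> space M)) (at_right a)"
    using D.cdf_is_right_cont[of a] by (simp add: continuous_within cdf)
  show "((\<lambda>x. measure M (g -` {..x} \<inter> space M)) \<longlongrightarrow> measure M (g -` {..<a} \<inter> space M)) (at_left a)"
    using D.cdf_at_left[of a] assms by (simp add: cdf measure_distr)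
qed

locale rectangle_distribution = prob_space \<mu> for \<mu> :: "(real \<times> real) measure" +
  fixes b1 b2 :: real
  assumes sets_eq_borel: "sets \<mu> = sets borel" and b_pos: "0 < b1" "0 < b2"
    and support: "measure \<mu> ({0<..<b1} \<times> {0<..<b2}) = 1"
begin

lemma space_eq_UNIV: "space \<mu> = UNIV"
  using sets_eq_imp_space_eq[OF sets_eq_borel] by simp

lemma closed_Times_in_sets: "closed A \<Longrightarrow> closed B \<Longrightarrow> A \<times> B \<in> sets \<mu>"
  using sets_eq_borel by (simp add: borel_closed closed_Times)

lemma bcdf_bounds: "0 \<le> bcdf \<mu> x y" "bcdf \<mu> x y \<le> 1"
  by (simp_all add: bcdf_def)

lemma mono_bcdf: "mono (\<lambda>x. bcdf \<mu> x y)" "mono (bcdf \<mu> x)"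
  unfolding mono_def bcdf_def by (auto intro!: finite_measure_mono closed_Times_in_sets)

lemma bcdf_le_marginals: "bcdf \<mu> x y \<le> measure \<mu> ({..x} \<times> UNIV)" "bcdf \<mu> x y \<le> measure \<mu> (UNIV \<times> {..y})"
  unfolding bcdf_def by (auto intro!: finite_measure_mono closed_Times_in_sets)

lemma measure_outside_support:
  assumes "S \<in> sets \<mu>" "S \<inter> {0<..<b1} \<times> {0<..<b2} = {}"
  shows "measure \<mu> S = 0"
proof -
  have R: "{0<..<b1} \<times> {0<..<b2} \<in> sets \<mu>"
    using sets_eq_borel by (simp add: borel_open open_Times)
  have "measure \<mu> S \<le> measure \<mu> (space \<mu> - {0<..<b1} \<times> {0<..<b2})"
    using assms sets.compl_sets[OF R] space_eq_UNIV by (intro finite_measure_mono) auto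
  also have "\<dots> = 0" using prob_compl[OF R] support by simp
  finally show ?thesis using measure_nonneg[of \<mu> S] by linarith
qed

lemma marginals_tendsto_zero:
  shows "((\<lambda>x. measure \<mu> ({..x} \<times> UNIV)) \<longlongrightarrow> 0) (at_right 0)"
    and "((\<lambda>y. measure \<mu> (UNIV \<times> {..y})) \<longlongrightarrow> 0) (at_right 0)"
proof -
  have fst: "fst \<in> borel_measurable \<mu>" and snd: "snd \<in> borel_measurable \<mu>"
    by (simp_all add: measurable_cong_sets[OF sets_eq_borel refl] borel_measurable_continuous_onI
        continuous_on_fst continuous_on_snd continuous_on_id)
  have "measure \<mu> ({..0} \<times> UNIV) = 0" "measure \<mu> (UNIV \<times> {..0}) = 0"
    by (auto intro!: measure_outside_support closed_Times_in_sets)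
  moreover have "fst -` {..x} \<inter> space \<mu> = {..x} \<times> UNIV" "snd -` {..x} \<inter> space \<mu> = UNIV \<times> {..x}" for x
    by (auto simp: space_eq_UNIV)
  ultimately show "((\<lambda>x. measure \<mu> ({..x} \<times> UNIV)) \<longlongrightarrow> 0) (at_right 0)"
      "((\<lambda>y. measure \<mu> (UNIV \<times> {..y})) \<longlongrightarrow> 0) (at_right 0)"
    using measure_vimage_atMost_tendsto_right[OF fst, of 0]
      measure_vimage_atMost_tendsto_right[OF snd, of 0] by simp_all
qed

text \<open>The rectangles \<open>{..s * b1} \<times> {..s * b2}\<close> are the sublevel sets of
  \<open>max (x / b1) (y / b2)\<close>, so the diagonal limit is a left limit of a univariate cdf.\<close>
lemma bcdf_diagonal_tendsto_one: "((\<lambda>s. bcdf \<mu> (s * b1) (s * b2)) \<longlongrightarrow> 1) (at_left 1)"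
proof -
  define g where "g z = max (fst z / b1) (snd z / b2)" for z :: "real \<times> real"
  have g: "g \<in> borel_measurable \<mu>"
    unfolding g_def measurable_cong_sets[OF sets_eq_borel refl]
    by (intro borel_measurable_continuous_onI continuous_intros) (use b_pos in auto)
  have "g -` {..s} \<inter> space \<mu> = {..s * b1} \<times> {..s * b2}" for s
    using b_pos by (auto simp: g_def space_eq_UNIV field_simps)
  moreover have "g -` {..<1} \<inter> space \<mu> = {..<b1} \<times> {..<b2}"
    using b_pos by (auto simp: g_def space_eq_UNIV field_simps)
  moreover have "measure \<mu> ({..<b1} \<times> {..<b2}) = 1"
  proof -
    have "1 \<le> measure \<mu> ({..<b1} \<times> {..<b2})"
      unfolding support[symmetric] using sets_eq_borel
      by (intro finite_measure_mono) (auto simp: borel_open open_Times)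
    then show ?thesis using prob_le_1 by (simp add: antisym)
  qed
  ultimately show ?thesis
    using measure_vimage_atMost_tendsto_left[OF g, of 1] by (simp add: bcdf_def)
qed

lemma log_bcdf_biaffine_constant_zero:
  assumes bcdf_exp: "\<And>t1 t2. t1 \<in> {0<..<b1} \<Longrightarrow> t2 \<in> {0<..<b2} \<Longrightarrow> bcdf \<mu> t1 t2 =
      exp (P + A * ln (t1 / b1) + B * ln (t2 / b2) + \<theta> * ln (t1 / b1) * ln (t2 / b2))"
  shows "P = 0"
proof -
  have "eventually (\<lambda>s. bcdf \<mu> (s * b1) (s * b2) = exp (P + A * ln s + B * ln s + \<theta> * ln s * ln s))
      (at_left 1)"
    by (rule eventually_mono[OF eventually_at_left_real[of 0 1]]) (use b_pos in \<open>auto simp: bcdf_exp\<close>)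
  moreover have "((\<lambda>s. exp (P + A * ln s + B * ln s + \<theta> * ln s * ln s)) \<longlongrightarrow>
      exp (P + A * ln 1 + B * ln 1 + \<theta> * ln 1 * ln 1)) (at_left 1)"
    by (intro tendsto_intros) auto
  ultimately have "((\<lambda>s. bcdf \<mu> (s * b1) (s * b2)) \<longlongrightarrow> exp P) (at_left 1)"
    by (simp add: tendsto_cong)
  with bcdf_diagonal_tendsto_one have "exp P = 1"
    using tendsto_unique trivial_limit_at_left_real by blast
  then show "P = 0" by simp
qed

lemma log_bcdf_biaffine_coefficients_pos:
  assumes "0 \<le> A" "0 \<le> B"
    and bcdf_exp: "\<And>t1 t2. t1 \<in> {0<..<b1} \<Longrightarrow> t2 \<in> {0<..<b2} \<Longrightarrow> bcdf \<mu> t1 t2 =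
      exp (A * ln (t1 / b1) + B * ln (t2 / b2) + \<theta> * ln (t1 / b1) * ln (t2 / b2))"
  shows "0 < A" and "0 < B"
proof -
  have "exp (A * ln (t1 / b1)) \<le> measure \<mu> ({..t1} \<times> UNIV)" if t1: "t1 \<in> {0<..<b1}" for t1
  proof (rule tendsto_upperbound)
    have "((\<lambda>t2. exp (A * ln (t1 / b1) + B * ln (t2 / b2) + \<theta> * ln (t1 / b1) * ln (t2 / b2)))
        \<longlongrightarrow> exp (A * ln (t1 / b1))) (at_left b2)"
      using b_pos by (auto intro!: tendsto_eq_intros)
    then show "((\<lambda>t2. bcdf \<mu> t1 t2) \<longlongrightarrow> exp (A * ln (t1 / b1))) (at_left b2)"
      by (rule tendsto_cong[THEN iffD1, rotated])
        (rule eventually_mono[OF eventually_at_left_real[OF b_pos(2)]], use t1 bcdf_exp in auto)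
  qed (auto intro: always_eventually bcdf_le_marginals)
  then show "0 < A"
    using exponent_pos_if_power_below_vanishing[OF b_pos(1) \<open>0 \<le> A\<close> marginals_tendsto_zero(1)]
    by simp
  have "exp (B * ln (t2 / b2)) \<le> measure \<mu> (UNIV \<times> {..t2})" if t2: "t2 \<in> {0<..<b2}" for t2
  proof (rule tendsto_upperbound)
    have "((\<lambda>t1. exp (A * ln (t1 / b1) + B * ln (t2 / b2) + \<theta> * ln (t1 / b1) * ln (t2 / b2)))
        \<longlongrightarrow> exp (B * ln (t2 / b2))) (at_left b1)"
      using b_pos by (auto intro!: tendsto_eq_intros)
    then show "((\<lambda>t1. bcdf \<mu> t1 t2) \<longlongrightarrow> exp (B * ln (t2 / b2))) (at_left b1)"
      by (rule tendsto_cong[THEN iffD1, rotated])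
        (rule eventually_mono[OF eventually_at_left_real[OF b_pos(1)]], use t2 bcdf_exp in auto)
  qed (auto intro: always_eventually bcdf_le_marginals)
  then show "0 < B"
    using exponent_pos_if_power_below_vanishing[OF b_pos(2) \<open>0 \<le> B\<close> marginals_tendsto_zero(2)]
    by simp
qed

lemma log_bcdf_affine_sections:
  assumes F_pos: "\<And>t1 t2. t1 \<in> {0<..<b1} \<Longrightarrow> t2 \<in> {0<..<b2} \<Longrightarrow> 0 < bcdf \<mu> t1 t2"
    and cf1: "\<And>t2. t2 \<in> {0<..<b2} \<Longrightarrow> cf1 t2 < 1"
    and cf2: "\<And>t1. t1 \<in> {0<..<b1} \<Longrightarrow> cf2 t1 < 1"
    and proportional: "\<And>t1 t2. t1 \<in> {0<..<b1} \<Longrightarrow> t2 \<in> {0<..<b2} \<Longrightarrow>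
      cdcpe1 (bcdf \<mu>) t1 t2 = cf1 t2 * mit1 (bcdf \<mu>) t1 t2 \<and>
      cdcpe2 (bcdf \<mu>) t1 t2 = cf2 t1 * mit2 (bcdf \<mu>) t1 t2"
  shows "\<exists>\<alpha>1 \<alpha>2. \<forall>t1\<in>{0<..<b1}. \<forall>t2\<in>{0<..<b2}.
    ln (bcdf \<mu> t1 t2) = \<alpha>1 t2 + cf1 t2 / (1 - cf1 t2) * ln (t1 / b1) \<and>
    ln (bcdf \<mu> t1 t2) = \<alpha>2 t1 + cf2 t1 / (1 - cf2 t1) * ln (t2 / b2)"
proof -
  have "\<forall>t2\<in>{0<..<b2}. \<exists>\<alpha>. \<forall>t1\<in>{0<..<b1}.
      ln (bcdf \<mu> t1 t2) = \<alpha> + cf1 t2 / (1 - cf1 t2) * ln (t1 / b1)"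
  proof
    fix t2 assume t2: "t2 \<in> {0<..<b2}"
    interpret cpe_proportional "\<lambda>x. bcdf \<mu> x t2" b1 "cf1 t2"
      by unfold_locales (use b_pos cf1 mono_bcdf bcdf_bounds F_pos t2 proportional in
        \<open>auto simp: cdcpe1_eq_cumulative_past_entropy mit1_eq_mean_inactivity_time\<close>)
    obtain \<alpha> where "\<And>t1. 0 < t1 \<Longrightarrow> t1 < b1 \<Longrightarrow>
        ln (bcdf \<mu> t1 t2) = \<alpha> + cf1 t2 / (1 - cf1 t2) * ln (t1 / b1)"
      using ln_G_affine by blast
    then show "\<exists>\<alpha>. \<forall>t1\<in>{0<..<b1}. ln (bcdf \<mu> t1 t2) = \<alpha> + cf1 t2 / (1 - cf1 t2) * ln (t1 / b1)"
      by auto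
  qed
  then obtain \<alpha>1 where \<alpha>1: "\<forall>t2\<in>{0<..<b2}. \<forall>t1\<in>{0<..<b1}.
      ln (bcdf \<mu> t1 t2) = \<alpha>1 t2 + cf1 t2 / (1 - cf1 t2) * ln (t1 / b1)"
    by (metis bchoice)
  have "\<forall>t1\<in>{0<..<b1}. \<exists>\<alpha>. \<forall>t2\<in>{0<..<b2}.
      ln (bcdf \<mu> t1 t2) = \<alpha> + cf2 t1 / (1 - cf2 t1) * ln (t2 / b2)"
  proof
    fix t1 assume t1: "t1 \<in> {0<..<b1}"
    interpret cpe_proportional "bcdf \<mu> t1" b2 "cf2 t1"
      by unfold_locales (use b_pos cf2 mono_bcdf bcdf_bounds F_pos t1 proportional in
        \<open>auto simp: cdcpe2_eq_cumulative_past_entropy mit2_eq_mean_inactivity_time\<close>)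
    obtain \<alpha> where "\<And>t2. 0 < t2 \<Longrightarrow> t2 < b2 \<Longrightarrow>
        ln (bcdf \<mu> t1 t2) = \<alpha> + cf2 t1 / (1 - cf2 t1) * ln (t2 / b2)"
      using ln_G_affine by blast
    then show "\<exists>\<alpha>. \<forall>t2\<in>{0<..<b2}. ln (bcdf \<mu> t1 t2) = \<alpha> + cf2 t1 / (1 - cf2 t1) * ln (t2 / b2)"
      by auto
  qed
  then obtain \<alpha>2 where \<alpha>2: "\<forall>t1\<in>{0<..<b1}. \<forall>t2\<in>{0<..<b2}.
      ln (bcdf \<mu> t1 t2) = \<alpha>2 t1 + cf2 t1 / (1 - cf2 t1) * ln (t2 / b2)"
    by (metis bchoice)
  show ?thesis
  proof (rule exI[of _ \<alpha>1], rule exI[of _ \<alpha>2], intro ballI)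
    fix t1 t2 assume "t1 \<in> {0<..<b1}" "t2 \<in> {0<..<b2}"
    then show "ln (bcdf \<mu> t1 t2) = \<alpha>1 t2 + cf1 t2 / (1 - cf1 t2) * ln (t1 / b1) \<and>
        ln (bcdf \<mu> t1 t2) = \<alpha>2 t1 + cf2 t1 / (1 - cf2 t1) * ln (t2 / b2)"
      using \<alpha>1 \<alpha>2 by blast
  qed
qed

text \<open>In the coordinates \<open>u = ln (t1 / b1)\<close>, \<open>v = ln (t2 / b2)\<close> the logarithm of the cdf is
  affine in each variable separately, hence of the form \<open>P + A u + B v + \<theta> u v\<close>.\<close>
lemma log_bcdf_biaffine:
  assumes F_pos: "\<And>t1 t2. t1 \<in> {0<..<b1} \<Longrightarrow> t2 \<in> {0<..<b2} \<Longrightarrow> 0 < bcdf \<mu> t1 t2"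
    and cf1: "\<And>t2. t2 \<in> {0<..<b2} \<Longrightarrow> cf1 t2 \<in> {0<..<1}"
    and cf2: "\<And>t1. t1 \<in> {0<..<b1} \<Longrightarrow> cf2 t1 \<in> {0<..<1}"
    and proportional: "\<And>t1 t2. t1 \<in> {0<..<b1} \<Longrightarrow> t2 \<in> {0<..<b2} \<Longrightarrow>
      cdcpe1 (bcdf \<mu>) t1 t2 = cf1 t2 * mit1 (bcdf \<mu>) t1 t2 \<and>
      cdcpe2 (bcdf \<mu>) t1 t2 = cf2 t1 * mit2 (bcdf \<mu>) t1 t2"
  shows "\<exists>\<theta> A B P. \<theta> \<le> 0 \<and> 0 \<le> A \<and> 0 \<le> B \<and> (\<forall>t1\<in>{0<..<b1}. \<forall>t2\<in>{0<..<b2}.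
    bcdf \<mu> t1 t2 = exp (P + A * ln (t1 / b1) + B * ln (t2 / b2) + \<theta> * ln (t1 / b1) * ln (t2 / b2)))"
proof -
  have cf1_less: "cf1 t2 < 1" if "t2 \<in> {0<..<b2}" for t2 using cf1[OF that] by simp
  have cf2_less: "cf2 t1 < 1" if "t1 \<in> {0<..<b1}" for t1 using cf2[OF that] by simp
  define k1 where "k1 t2 = cf1 t2 / (1 - cf1 t2)" for t2
  define k2 where "k2 t1 = cf2 t1 / (1 - cf2 t1)" for t1
  obtain \<alpha>1 \<alpha>2 where \<alpha>: "\<And>t1 t2. t1 \<in> {0<..<b1} \<Longrightarrow> t2 \<in> {0<..<b2} \<Longrightarrow>
      ln (bcdf \<mu> t1 t2) = \<alpha>1 t2 + k1 t2 * ln (t1 / b1) \<and>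
      ln (bcdf \<mu> t1 t2) = \<alpha>2 t1 + k2 t1 * ln (t2 / b2)"
    using log_bcdf_affine_sections[OF F_pos cf1_less cf2_less proportional]
    unfolding k1_def k2_def by blast
  define f where "f u v = ln (bcdf \<mu> (b1 * exp u) (b2 * exp v))" for u v
  have in_rect: "b1 * exp u \<in> {0<..<b1}" "b2 * exp u \<in> {0<..<b2}" if "u < 0" for u
    using that b_pos by auto
  have affine1: "f u v = \<alpha>1 (b2 * exp v) + k1 (b2 * exp v) * u" if "u \<in> {..<0}" "v \<in> {..<0}" for u v
    using conjunct1[OF \<alpha>[OF in_rect(1) in_rect(2)]] that b_pos by (simp add: f_def)
  have affine2: "f u v = \<alpha>2 (b1 * exp u) + k2 (b1 * exp u) * v" if "u \<in> {..<0}" "v \<in> {..<0}" for u v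
    using conjunct2[OF \<alpha>[OF in_rect(1) in_rect(2)]] that b_pos by (simp add: f_def)
  obtain P A B \<theta> where biaffine: "\<And>u v. u < 0 \<Longrightarrow> v < 0 \<Longrightarrow> f u v = P + A * u + B * v + \<theta> * u * v"
    and slope1: "\<And>v. v < 0 \<Longrightarrow> k1 (b2 * exp v) = A + \<theta> * v"
    and slope2: "\<And>u. u < 0 \<Longrightarrow> k2 (b1 * exp u) = B + \<theta> * u"
    using biaffine_if_separately_affine[where X="{..<0}" and Y="{..<0}" and p="-1" and q="-2"
        and r="-1" and s="-2", OF _ _ _ _ _ _ affine1 affine2] by simp blast
  have "0 < A + \<theta> * v" if "v < 0" for v
    using slope1[OF that, symmetric] cf1[OF in_rect(2)[OF that]] by (simp add: k1_def)
  then have \<theta>: "\<theta> \<le> 0" and A: "0 \<le> A" by (fact affine_pos_on_negatives)+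
  have "0 < B + \<theta> * u" if "u < 0" for u
    using slope2[OF that, symmetric] cf2[OF in_rect(1)[OF that]] by (simp add: k2_def)
  then have B: "0 \<le> B" by (fact affine_pos_on_negatives(2))
  have "bcdf \<mu> t1 t2 =
      exp (P + A * ln (t1 / b1) + B * ln (t2 / b2) + \<theta> * ln (t1 / b1) * ln (t2 / b2))"
    if t: "t1 \<in> {0<..<b1}" "t2 \<in> {0<..<b2}" for t1 t2
    using F_pos[OF t] biaffine[of "ln (t1 / b1)" "ln (t2 / b2)"] t b_pos
    by (simp add: f_def) (metis exp_ln)
  then show ?thesis using \<theta> A B by blast
qed

theorem power_form_if_cdcpe_proportional:
  assumes F_pos: "\<And>t1 t2. t1 \<in> {0<..<b1} \<Longrightarrow> t2 \<in> {0<..<b2} \<Longrightarrow> 0 < bcdf \<mu> t1 t2"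
    and cf1: "\<And>t2. t2 \<in> {0<..<b2} \<Longrightarrow> cf1 t2 \<in> {0<..<1}"
    and cf2: "\<And>t1. t1 \<in> {0<..<b1} \<Longrightarrow> cf2 t1 \<in> {0<..<1}"
    and proportional: "\<And>t1 t2. t1 \<in> {0<..<b1} \<Longrightarrow> t2 \<in> {0<..<b2} \<Longrightarrow>
      cdcpe1 (bcdf \<mu>) t1 t2 = cf1 t2 * mit1 (bcdf \<mu>) t1 t2 \<and>
      cdcpe2 (bcdf \<mu>) t1 t2 = cf2 t1 * mit2 (bcdf \<mu>) t1 t2"
  shows "\<exists>\<theta> c1 c2. \<theta> \<le> 0 \<and> 0 < c1 \<and> 0 < c2 \<and> (\<forall>t1\<in>{0<..<b1}. \<forall>t2\<in>{0<..<b2}.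
    bcdf \<mu> t1 t2 = (t1 / b1) powr c1 * (t2 / b2) powr (c2 + \<theta> * ln (t1 / b1)))"
proof -
  obtain P A B \<theta> where \<theta>: "\<theta> \<le> 0" and A: "0 \<le> A" and B: "0 \<le> B"
    and bcdf_exp: "\<And>t1 t2. t1 \<in> {0<..<b1} \<Longrightarrow> t2 \<in> {0<..<b2} \<Longrightarrow> bcdf \<mu> t1 t2 =
      exp (P + A * ln (t1 / b1) + B * ln (t2 / b2) + \<theta> * ln (t1 / b1) * ln (t2 / b2))"
    using log_bcdf_biaffine[OF assms] by blast
  have P: "P = 0" by (rule log_bcdf_biaffine_constant_zero[OF bcdf_exp])
  have bcdf_exp0: "bcdf \<mu> t1 t2 =
      exp (A * ln (t1 / b1) + B * ln (t2 / b2) + \<theta> * ln (t1 / b1) * ln (t2 / b2))"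
    if "t1 \<in> {0<..<b1}" "t2 \<in> {0<..<b2}" for t1 t2
    using bcdf_exp[OF that] by (simp add: P)
  note A_pos = log_bcdf_biaffine_coefficients_pos(1)[OF A B bcdf_exp0]
    and B_pos = log_bcdf_biaffine_coefficients_pos(2)[OF A B bcdf_exp0]
  have "bcdf \<mu> t1 t2 = (t1 / b1) powr A * (t2 / b2) powr (B + \<theta> * ln (t1 / b1))"
    if "t1 \<in> {0<..<b1}" "t2 \<in> {0<..<b2}" for t1 t2
    using that b_pos by (simp add: bcdf_exp P bivariate_power_eq_exp algebra_simps)
  then show ?thesis using \<theta> A_pos B_pos by blast
qed

end

theorem mainTheorem16:
  fixes \<mu> :: "(real \<times> real) measure" and b1 b2 :: real
  defines "F \<equiv> bcdf \<mu>"
  assumes prob: "prob_space \<mu>"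
    and sets_borel: "sets \<mu> = sets borel"
    and abs_cont: "absolutely_continuous lborel \<mu>"
    and support: "measure \<mu> ({0<..<b1} \<times> {0<..<b2}) = 1"
    and b_pos: "0 < b1" "0 < b2"
    and F_pos: "\<And>t1 t2. 0 < t1 \<Longrightarrow> t1 < b1 \<Longrightarrow> 0 < t2 \<Longrightarrow> t2 < b2 \<Longrightarrow> 0 < F t1 t2"
    and finite1: "\<And>t1 t2. 0 < t1 \<Longrightarrow> t1 < b1 \<Longrightarrow> 0 < t2 \<Longrightarrow> t2 < b2 \<Longrightarrow>
        interval_lebesgue_integrable lborel 0 (ereal t1) (cdcpe1_integrand F t1 t2)"
    and finite2: "\<And>t1 t2. 0 < t1 \<Longrightarrow> t1 < b1 \<Longrightarrow> 0 < t2 \<Longrightarrow> t2 < b2 \<Longrightarrow>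
        interval_lebesgue_integrable lborel 0 (ereal t2) (cdcpe2_integrand F t1 t2)"
  shows
    "((\<exists>cf1 cf2 :: real \<Rightarrow> real.
        (\<forall>t2\<in>{0<..<b2}. cf1 t2 \<in> {0<..<1}) \<and> (\<forall>t1\<in>{0<..<b1}. cf2 t1 \<in> {0<..<1}) \<and>
        (\<forall>t1\<in>{0<..<b1}. \<forall>t2\<in>{0<..<b2}.
           cdcpe1 F t1 t2 = cf1 t2 * mit1 F t1 t2 \<and> cdcpe2 F t1 t2 = cf2 t1 * mit2 F t1 t2))
     \<longleftrightarrow>
     (\<exists>\<theta> c1 c2 :: real. \<theta> \<le> 0 \<and> 0 < c1 \<and> 0 < c2 \<and>
        (\<forall>t1\<in>{0<..<b1}. \<forall>t2\<in>{0<..<b2}.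
           F t1 t2 = (t1 / b1) powr c1 * (t2 / b2) powr (c2 + \<theta> * ln (t1 / b1)))))
   \<and>
    (\<forall>cf1 cf2 :: real \<Rightarrow> real. \<forall>\<theta> c1 c2 :: real.
       ((\<forall>t2\<in>{0<..<b2}. cf1 t2 \<in> {0<..<1}) \<and> (\<forall>t1\<in>{0<..<b1}. cf2 t1 \<in> {0<..<1}) \<and>
        (\<forall>t1\<in>{0<..<b1}. \<forall>t2\<in>{0<..<b2}.
           cdcpe1 F t1 t2 = cf1 t2 * mit1 F t1 t2 \<and> cdcpe2 F t1 t2 = cf2 t1 * mit2 F t1 t2) \<and>
        \<theta> \<le> 0 \<and> 0 < c1 \<and> 0 < c2 \<and>
        (\<forall>t1\<in>{0<..<b1}. \<forall>t2\<in>{0<..<b2}.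
           F t1 t2 = (t1 / b1) powr c1 * (t2 / b2) powr (c2 + \<theta> * ln (t1 / b1))))
       \<longrightarrow> (\<exists>L1 L2. (cf1 \<longlongrightarrow> L1) (at_left b2) \<and> (cf2 \<longlongrightarrow> L2) (at_left b1) \<and>
                    c1 = L1 / (1 - L1) \<and> c2 = L2 / (1 - L2)))"
proof -
  interpret rectangle_distribution \<mu> b1 b2
    using prob sets_borel b_pos support by (simp add: rectangle_distribution_def rectangle_distribution_axioms_def)
  have F_pos': "\<And>t1 t2. t1 \<in> {0<..<b1} \<Longrightarrow> t2 \<in> {0<..<b2} \<Longrightarrow> 0 < bcdf \<mu> t1 t2"
    using F_pos by (simp add: F_def)
  have odds: "c = (c / (c + 1)) / (1 - c / (c + 1))" if "0 < c" for c :: real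
    using that by (simp add: field_simps)
  show ?thesis unfolding F_def
    apply (intro conjI iffI allI impI)
    subgoal using power_form_if_cdcpe_proportional[OF F_pos'] by blast
    subgoal by (elim exE conjE) (rule cdcpe_proportional_if_power_form[OF b_pos]; blast)
    subgoal for cf1 cf2 \<theta> c1 c2
      using proportionality_coefficients_eq[OF b_pos, of \<theta> c1 c2 "bcdf \<mu>" cf1 cf2]
        tendsto_power_form_coefficient[OF b_pos(2), of c1 cf1 \<theta>]
        tendsto_power_form_coefficient[OF b_pos(1), of c2 cf2 \<theta>] odds
      by blast
    done
qed

end
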